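(* For all integers $m>0$ and $k\in\mathbb Z$, \[ \Psi^\pm_{k+m}(x)=\pm\beta\,\frac{\partial}{\partial s_m}\Psi^\pm_k(x). \]
   Context: Let $G(z)=1+\sum_{i\ge1}g_iz^i$ be a formal power series, $\beta,\gamma$ formal parameters, ${\bf s}=(s_1,s_2,\dots)$ independent variables (derivatives $\partial/\partial s_m$ act coefficientwise). With $r_\lambda=\prod_{(i,j)\in\lambda}G((j-i)\beta)$ (boxes $(i,j)$, $i$ = row, $j$ = column) and Schur functions in ${\bf t}$ with $p_i=it_i$, let $\tau({\bf t})=\sum_\lambda\gamma^{|\lambda|}r_\lambda s_\lambda({\bf t})s_\lambda(\beta^{-1}{\bf s})$ and $\Psi_0^\pm(x)=\tau(\pm[x])$, $[x]=(x,x^2/2,\dots)$. $D=x\,d/dx$; $R_\pm=\gamma xG(\pm\beta D)$ acts on formal Laurent series in $x$ by $R_\pm(x^j)=\gamma G(\pm\beta j)x^{j+1}$ and is invertible; $\Psi^\pm_k=R_\pm^k\Psi^\pm_0$ for $k\in\mathbb Z$. *)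

theory Defs
  imports "HOL-Library.Poly_Mapping"
          "HOL-Computational_Algebra.Formal_Laurent_Series"
          "HOL-Computational_Algebra.Polynomial"
          "HOL-Combinatorics.Permutations"
begin

section \<open>Polynomials in the infinitely many variables t_1, t_2, ... (index 0 unused)\<close>

type_synonym 'a mvpoly = "(nat \<Rightarrow>\<^sub>0 nat) \<Rightarrow>\<^sub>0 'a"

text \<open>Complete homogeneous functions h_n(t), defined by
  exp(sum_{i>=1} t_i z^i) = sum_n h_n(t) z^n, i.e.
  h_n(t) = sum over (k_1,k_2,...) with sum i*k_i = n of prod t_i^{k_i}/k_i!.\<close>
definition hfun :: "int \<Rightarrow> rat mvpoly" where
  "hfun n = (if n < 0 then 0 else
     (\<Sum>a \<in> {a :: nat \<Rightarrow>\<^sub>0 nat. 0 \<notin> Poly_Mapping.keys a \<and>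
                 (\<Sum>i\<in>Poly_Mapping.keys a. i * Poly_Mapping.lookup a i) = nat n}.
        Poly_Mapping.single a (1 / of_nat (\<Prod>i\<in>Poly_Mapping.keys a. fact (Poly_Mapping.lookup a i)))))"

definition is_partition :: "nat list \<Rightarrow> bool" where
  "is_partition lam \<longleftrightarrow> sorted_wrt (\<ge>) lam \<and> (\<forall>x\<in>set lam. 0 < x)"

text \<open>Schur function s_lambda(t) via Jacobi--Trudi: det (h_{lambda_i - i + j}) (Leibniz formula).\<close>
definition schur :: "nat list \<Rightarrow> rat mvpoly" where
  "schur lam = (let l = length lam in
     \<Sum>p | p permutes {..<l}. of_int (sign p) *
        (\<Prod>i<l. hfun (int (lam ! i) - int i + int (p i))))"

definition evalp :: "(rat \<Rightarrow> 'r::comm_ring_1) \<Rightarrow> (nat \<Rightarrow> 'r) \<Rightarrow> rat mvpoly \<Rightarrow> 'r" where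
  "evalp emb tv p = (\<Sum>a\<in>Poly_Mapping.keys p.
      emb (Poly_Mapping.lookup p a) * (\<Prod>i\<in>Poly_Mapping.keys a. tv i ^ Poly_Mapping.lookup a i))"

section \<open>The data: beta = fls_X (Laurent series in beta over a field 'k of characteristic 0)\<close>

definition Gat :: "'k::field_char_0 fps \<Rightarrow> int \<Rightarrow> 'k fls" where
  "Gat G c = fps_to_fls (G oo (fps_const (of_int c) * fps_X))"

text \<open>r_lambda = prod over boxes (i,j) (row i, column j, 1-based) of G((j-i) beta).\<close>
definition rlam :: "'k::field_char_0 fps \<Rightarrow> nat list \<Rightarrow> 'k fls" where
  "rlam G lam = (\<Prod>i<length lam. \<Prod>j<lam ! i. Gat G (int j - int i))"

text \<open>s_lambda(eps [x]) with [x]_i = x^i / i, as a rational polynomial in x.\<close>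
definition schur_x :: "int \<Rightarrow> nat list \<Rightarrow> rat poly" where
  "schur_x eps lam = evalp (\<lambda>q. [:q:]) (\<lambda>i. Polynomial.monom (of_int eps / of_nat i) i) (schur lam)"

text \<open>s_lambda(beta^{-1} s) as a polynomial in s_1, s_2, ... with coefficients in 'k fls.\<close>
definition schur_s :: "nat list \<Rightarrow> ('k::field_char_0 fls) mvpoly" where
  "schur_s lam = evalp (\<lambda>q. Poly_Mapping.single 0 (fls_const (of_rat q)))
      (\<lambda>i. Poly_Mapping.single (Poly_Mapping.single i 1) fls_X_inv) (schur lam)"

text \<open>Objects: formal Laurent series in x whose coefficients are polynomials in s;
  F j a is the coefficient of x^j s^a.\<close>
type_synonym 'k xser = "int \<Rightarrow> (nat \<Rightarrow>\<^sub>0 nat) \<Rightarrow> 'k fls"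

definition tau_term :: "'k::field_char_0 fps \<Rightarrow> 'k \<Rightarrow> int \<Rightarrow> nat list \<Rightarrow> int \<Rightarrow> (nat \<Rightarrow>\<^sub>0 nat) \<Rightarrow> 'k fls" where
  "tau_term G gam eps lam j a =
     fls_const (gam ^ sum_list lam) * rlam G lam *
     fls_const (of_rat (if j < 0 then 0 else poly.coeff (schur_x eps lam) (nat j))) *
     Poly_Mapping.lookup (schur_s lam) a"

text \<open>Psi_0^eps(x) = tau(eps [x]) (the formally convergent sum over all partitions,
  written as the sum over the support).\<close>
definition Psi0 :: "'k::field_char_0 fps \<Rightarrow> 'k \<Rightarrow> int \<Rightarrow> 'k xser" where
  "Psi0 G gam eps j a = (\<Sum>lam | is_partition lam \<and> tau_term G gam eps lam j a \<noteq> 0.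
                           tau_term G gam eps lam j a)"

text \<open>R_eps (x^j) = gam G(eps beta j) x^(j+1), and its inverse.\<close>
definition Rop :: "'k::field_char_0 fps \<Rightarrow> 'k \<Rightarrow> int \<Rightarrow> 'k xser \<Rightarrow> 'k xser" where
  "Rop G gam eps F j a = fls_const gam * Gat G (eps * (j - 1)) * F (j - 1) a"

definition Rinv :: "'k::field_char_0 fps \<Rightarrow> 'k \<Rightarrow> int \<Rightarrow> 'k xser \<Rightarrow> 'k xser" where
  "Rinv G gam eps F j a = F (j + 1) a / (fls_const gam * Gat G (eps * j))"

definition Psi :: "'k::field_char_0 fps \<Rightarrow> 'k \<Rightarrow> int \<Rightarrow> int \<Rightarrow> 'k xser" where
  "Psi G gam eps k = (if 0 \<le> k then (Rop G gam eps ^^ nat k) (Psi0 G gam eps)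
                      else (Rinv G gam eps ^^ nat (- k)) (Psi0 G gam eps))"

definition dS :: "nat \<Rightarrow> 'k::field_char_0 xser \<Rightarrow> 'k xser" where
  "dS m F j a = of_nat (Poly_Mapping.lookup a m + 1) * F j (a + Poly_Mapping.single m 1)"

end

(* At the Miwa point eps[x] (t_i = eps x^i / i) the Jacobi--Trudi determinant of s_lam vanishes
   unless lam is a single row (eps = 1: h_n([x]) = x^n makes the first two rows proportional) or a
   single column (eps = -1: h_n(-[x]) = 0 for n >= 2 kills the first row of every wider shape).
   Hence Psi_0^+ = sum_n gam^n r_(n) x^n h_n(s/beta) and Psi_0^- = sum_n gam^n r_(1^n) (-x)^n e_n(s/beta).
   Since dh_n/dt_m = h_(n-m) and de_n/dt_m = (-1)^(m+1) e_(n-m) (from H(-z) E(z) = 1), the derivative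
   in s_m lowers the degree in x by m at the price of a factor eps/beta, and the factors gam G(eps j beta)
   contributed by R^m are exactly those by which r of the longer row or column exceeds r of the
   shorter one.  This is the case k = 0; as R and its inverse commute with d/ds_m and with scalars,
   the identity propagates to all k. *)

theory Submission
  imports Defs "Jordan_Normal_Form.Determinant"
begin

(* Otherwise simp turns Poly_Mapping.single i 1 (the abbreviation unit_exp below) into
   Poly_Mapping.single i (Suc 0), and the lemmas about unit_exp stop matching. *)
declare One_nat_def [simp del]

section \<open>Evaluation of polynomials in \<open>t\<close>\<close>

abbreviation unit_exp :: "nat \<Rightarrow> nat \<Rightarrow>\<^sub>0 nat" where
  "unit_exp i \<equiv> Poly_Mapping.single i 1"

lemma poly_mapping_sum_single:
  "p = (\<Sum>a\<in>Poly_Mapping.keys p. Poly_Mapping.single a (Poly_Mapping.lookup p a))"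
  by (rule poly_mapping_eqI)
     (simp add: lookup_sum lookup_single when_def in_keys_iff sum.delta' split: if_splits)

definition monom_eval :: "(nat \<Rightarrow> 'r::comm_ring_1) \<Rightarrow> (nat \<Rightarrow>\<^sub>0 nat) \<Rightarrow> 'r" where
  "monom_eval tv a = (\<Prod>i\<in>Poly_Mapping.keys a. tv i ^ Poly_Mapping.lookup a i)"

lemma monom_eval_superset:
  assumes "finite U" "Poly_Mapping.keys a \<subseteq> U"
  shows "monom_eval tv a = (\<Prod>i\<in>U. tv i ^ Poly_Mapping.lookup a i)"
  unfolding monom_eval_def
  by (rule prod.mono_neutral_left) (use assms in \<open>auto simp: in_keys_iff\<close>)

lemma monom_eval_0 [simp]: "monom_eval tv 0 = 1"
  by (simp add: monom_eval_def)

lemma monom_eval_unit_exp: "monom_eval tv (unit_exp i) = tv i"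
  by (simp add: monom_eval_def)

lemma monom_eval_add: "monom_eval tv (a + b) = monom_eval tv a * monom_eval tv b"
proof -
  let ?U = "Poly_Mapping.keys a \<union> Poly_Mapping.keys b"
  have "monom_eval tv (a + b) = (\<Prod>i\<in>?U. tv i ^ Poly_Mapping.lookup a i * tv i ^ Poly_Mapping.lookup b i)"
    by (subst monom_eval_superset[of ?U]) (auto dest: set_mp[OF keys_add] simp: lookup_add power_add)
  also have "\<dots> = monom_eval tv a * monom_eval tv b"
    by (simp add: prod.distrib monom_eval_superset[of ?U])
  finally show ?thesis .
qed

context
  fixes emb :: "rat \<Rightarrow> 'r::comm_ring_1"
  assumes emb: "comm_ring_hom emb"
begin

interpretation comm_ring_hom emb
  by (rule emb)

lemma evalp_superset:
  assumes "finite S" "Poly_Mapping.keys p \<subseteq> S"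
  shows "evalp emb tv p = (\<Sum>a\<in>S. emb (Poly_Mapping.lookup p a) * monom_eval tv a)"
  unfolding evalp_def monom_eval_def[symmetric]
  by (rule sum.mono_neutral_left) (use assms in \<open>auto simp: in_keys_iff\<close>)

lemma evalp_single: "evalp emb tv (Poly_Mapping.single a c) = emb c * monom_eval tv a"
  by (cases "c = 0") (auto simp: evalp_def monom_eval_def)

lemma evalp_0: "evalp emb tv 0 = 0"
  by (simp add: evalp_def)

lemma evalp_add: "evalp emb tv (p + q) = evalp emb tv p + evalp emb tv q"
proof -
  let ?U = "Poly_Mapping.keys p \<union> Poly_Mapping.keys q"
  have "evalp emb tv (p + q) = (\<Sum>a\<in>?U. emb (Poly_Mapping.lookup (p + q) a) * monom_eval tv a)"
    by (rule evalp_superset) (auto dest: set_mp[OF keys_add])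
  also have "\<dots> = evalp emb tv p + evalp emb tv q"
    by (simp add: lookup_add hom_add distrib_right sum.distrib evalp_superset[of ?U])
  finally show ?thesis .
qed

lemma evalp_mult: "evalp emb tv (p * q) = evalp emb tv p * evalp emb tv q"
proof -
  have expand: "p * q = (\<Sum>a\<in>Poly_Mapping.keys p. \<Sum>b\<in>Poly_Mapping.keys q.
      Poly_Mapping.single (a + b) (Poly_Mapping.lookup p a * Poly_Mapping.lookup q b))"
    by (subst poly_mapping_sum_single[of p], subst poly_mapping_sum_single[of q])
       (simp add: sum_distrib_left sum_distrib_right mult_single sum.swap[of _ "Poly_Mapping.keys q"])
  have sum: "evalp emb tv (\<Sum>a\<in>A. f a) = (\<Sum>a\<in>A. evalp emb tv (f a))" for A and f :: "_ \<Rightarrow> rat mvpoly"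
    by (induction A rule: infinite_finite_induct) (auto simp: evalp_add evalp_0)
  have "evalp emb tv (p * q) = (\<Sum>a\<in>Poly_Mapping.keys p. \<Sum>b\<in>Poly_Mapping.keys q.
      emb (Poly_Mapping.lookup p a) * monom_eval tv a * (emb (Poly_Mapping.lookup q b) * monom_eval tv b))"
    by (simp add: expand sum evalp_single hom_mult monom_eval_add ac_simps)
  also have "\<dots> = evalp emb tv p * evalp emb tv q"
    by (simp add: evalp_def monom_eval_def sum_product)
  finally show ?thesis .
qed

lemma comm_ring_hom_evalp: "comm_ring_hom (evalp emb tv)"
proof -
  have "evalp emb tv 1 = 1"
    using evalp_single[where a=0 and c=1 and tv=tv] by simp
  then show ?thesis
    by unfold_locales (simp_all add: evalp_0 evalp_add evalp_mult)
qed

end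

section \<open>Exponent vectors and partial derivatives\<close>

definition exp_weight :: "(nat \<Rightarrow>\<^sub>0 nat) \<Rightarrow> nat" where
  "exp_weight a = (\<Sum>i\<in>Poly_Mapping.keys a. i * Poly_Mapping.lookup a i)"

definition exp_fact :: "(nat \<Rightarrow>\<^sub>0 nat) \<Rightarrow> nat" where
  "exp_fact a = (\<Prod>i\<in>Poly_Mapping.keys a. fact (Poly_Mapping.lookup a i))"

definition exp_degree :: "(nat \<Rightarrow>\<^sub>0 nat) \<Rightarrow> nat" where
  "exp_degree a = (\<Sum>i\<in>Poly_Mapping.keys a. Poly_Mapping.lookup a i)"

lemma exp_weight_superset:
  "finite U \<Longrightarrow> Poly_Mapping.keys a \<subseteq> U \<Longrightarrow> exp_weight a = (\<Sum>i\<in>U. i * Poly_Mapping.lookup a i)"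
  unfolding exp_weight_def by (rule sum.mono_neutral_left) (auto simp: in_keys_iff)

lemma exp_fact_superset:
  "finite U \<Longrightarrow> Poly_Mapping.keys a \<subseteq> U \<Longrightarrow> exp_fact a = (\<Prod>i\<in>U. fact (Poly_Mapping.lookup a i))"
  unfolding exp_fact_def by (rule prod.mono_neutral_left) (auto simp: in_keys_iff)

lemma exp_degree_superset:
  "finite U \<Longrightarrow> Poly_Mapping.keys a \<subseteq> U \<Longrightarrow> exp_degree a = (\<Sum>i\<in>U. Poly_Mapping.lookup a i)"
  unfolding exp_degree_def by (rule sum.mono_neutral_left) (auto simp: in_keys_iff)

lemma exp_fact_pos: "exp_fact a > 0"
  by (simp add: exp_fact_def)

lemma lookup_add_unit_exp:
  "Poly_Mapping.lookup (a + unit_exp i) k = Poly_Mapping.lookup a k + (if k = i then 1 else 0)"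
  by (simp add: lookup_add lookup_single when_def)

lemma keys_add_unit_exp: "Poly_Mapping.keys (a + unit_exp i) = insert i (Poly_Mapping.keys a)"
  by (auto simp: in_keys_iff lookup_add_unit_exp split: if_splits)

lemma exp_weight_add_unit_exp: "exp_weight (a + unit_exp i) = exp_weight a + i"
proof -
  let ?U = "insert i (Poly_Mapping.keys a)"
  have "exp_weight (a + unit_exp i) = (\<Sum>k\<in>?U. k * Poly_Mapping.lookup a k + (if k = i then i else 0))"
    by (subst exp_weight_superset[of ?U])
       (auto simp: keys_add_unit_exp lookup_add_unit_exp algebra_simps intro!: sum.cong)
  also have "\<dots> = exp_weight a + i"
    using exp_weight_superset[of ?U a] by (simp add: sum.distrib subset_insertI)
  finally show ?thesis .
qed

lemma exp_degree_add_unit_exp: "exp_degree (a + unit_exp i) = exp_degree a + 1"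
  using exp_degree_superset[of "insert i (Poly_Mapping.keys a)"]
  by (simp add: keys_add_unit_exp lookup_add_unit_exp sum.distrib subset_insertI sum.delta)

lemma exp_fact_add_unit_exp:
  "exp_fact (a + unit_exp i) = (Poly_Mapping.lookup a i + 1) * exp_fact a"
proof -
  let ?U = "insert i (Poly_Mapping.keys a)" and ?f = "\<lambda>k. fact (Poly_Mapping.lookup a k) :: nat"
  have "exp_fact (a + unit_exp i) = fact (Poly_Mapping.lookup a i + 1) * (\<Prod>k\<in>?U - {i}. ?f k)"
    by (subst exp_fact_superset[of ?U]) (auto simp: keys_add_unit_exp lookup_add_unit_exp
        prod.insert_remove intro!: prod.cong)
  moreover have "exp_fact a = ?f i * (\<Prod>k\<in>?U - {i}. ?f k)"
    by (subst exp_fact_superset[of ?U]) (auto simp: prod.insert_remove)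
  moreover have "fact (Poly_Mapping.lookup a i + 1) = (Poly_Mapping.lookup a i + 1) * ?f i"
    by (simp flip: Suc_eq_plus1)
  ultimately show ?thesis
    by (metis mult.assoc)
qed

lemma add_unit_exp_diff [simp]: "(a + unit_exp i) - unit_exp i = a"
  by (rule poly_mapping_eqI) (simp add: lookup_minus lookup_add_unit_exp)

lemma diff_add_unit_exp: "Poly_Mapping.lookup a i \<noteq> 0 \<Longrightarrow> (a - unit_exp i) + unit_exp i = a"
  by (rule poly_mapping_eqI) (auto simp: lookup_minus lookup_add_unit_exp lookup_single when_def)

lemma eq_add_unit_exp_iff:
  "Poly_Mapping.lookup b i \<noteq> 0 \<Longrightarrow> b = a + unit_exp i \<longleftrightarrow> b - unit_exp i = a"
  by (metis add_unit_exp_diff diff_add_unit_exp)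

definition pdiff :: "nat \<Rightarrow> 'a::comm_semiring_1 mvpoly \<Rightarrow> 'a mvpoly" where
  "pdiff m p = (\<Sum>b\<in>Poly_Mapping.keys p.
      Poly_Mapping.single (b - unit_exp m) (of_nat (Poly_Mapping.lookup b m) * Poly_Mapping.lookup p b))"

lemma lookup_pdiff:
  "Poly_Mapping.lookup (pdiff m p) a =
     of_nat (Poly_Mapping.lookup a m + 1) * Poly_Mapping.lookup p (a + unit_exp m)"
proof -
  have summand: "Poly_Mapping.lookup (Poly_Mapping.single (b - unit_exp m)
        (of_nat (Poly_Mapping.lookup b m) * Poly_Mapping.lookup p b)) a =
      (if b = a + unit_exp m then of_nat (Poly_Mapping.lookup a m + 1) * Poly_Mapping.lookup p b else 0)"
    for b
  proof (cases "Poly_Mapping.lookup b m = 0")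
    case False
    then obtain c where "b = c + unit_exp m"
      by (metis diff_add_unit_exp)
    then show ?thesis
      by (auto simp: lookup_single when_def lookup_add_unit_exp)
  qed (auto simp: lookup_single when_def lookup_add_unit_exp)
  show ?thesis
    by (simp add: pdiff_def lookup_sum summand sum.delta' in_keys_iff)
qed

lemma pdiff_0: "pdiff m 0 = 0"
  by (simp add: pdiff_def)

lemma pdiff_add: "pdiff m (p + q) = pdiff m p + pdiff m q"
  by (rule poly_mapping_eqI) (simp add: lookup_pdiff lookup_add algebra_simps)

lemma pdiff_sum: "pdiff m (sum f A) = (\<Sum>x\<in>A. pdiff m (f x))"
  by (induction A rule: infinite_finite_induct) (auto simp: pdiff_add pdiff_0)

lemma pdiff_single:
  "pdiff m (Poly_Mapping.single a c) =
     Poly_Mapping.single (a - unit_exp m) (of_nat (Poly_Mapping.lookup a m) * c)"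
proof (cases "Poly_Mapping.lookup a m = 0")
  case True
  then show ?thesis
    by (intro poly_mapping_eqI) (auto simp: lookup_pdiff lookup_single when_def lookup_add_unit_exp)
next
  case False
  then obtain b where a: "a = b + unit_exp m"
    by (metis diff_add_unit_exp)
  show ?thesis
    by (intro poly_mapping_eqI) (auto simp: a lookup_pdiff lookup_single when_def lookup_add_unit_exp)
qed

lemma pdiff_const: "pdiff m (Poly_Mapping.single 0 c) = 0"
  by (simp add: pdiff_single)

lemma pdiff_single_mult_single:
  "pdiff m (Poly_Mapping.single a c * Poly_Mapping.single b d) =
     pdiff m (Poly_Mapping.single a c) * Poly_Mapping.single b d
     + Poly_Mapping.single a c * pdiff m (Poly_Mapping.single b d)"
proof -
  let ?la = "Poly_Mapping.lookup a m" and ?lb = "Poly_Mapping.lookup b m"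
  have left: "a + b - unit_exp m = (a - unit_exp m) + b" if "?la \<noteq> 0"
    by (rule poly_mapping_eqI) (use that in \<open>auto simp: lookup_add lookup_minus lookup_single when_def\<close>)
  have right: "a + b - unit_exp m = a + (b - unit_exp m)" if "?lb \<noteq> 0"
    by (rule poly_mapping_eqI) (use that in \<open>auto simp: lookup_add lookup_minus lookup_single when_def\<close>)
  have "pdiff m (Poly_Mapping.single a c * Poly_Mapping.single b d) =
      Poly_Mapping.single (a + b - unit_exp m) (of_nat ?la * c * d)
      + Poly_Mapping.single (a + b - unit_exp m) (c * (of_nat ?lb * d))"
    by (simp add: mult_single pdiff_single lookup_add algebra_simps flip: single_add)
  moreover have "a - unit_exp m + b = a + (b - unit_exp m)" if "?la \<noteq> 0" "?lb \<noteq> 0"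
    using left right that by metis
  ultimately show ?thesis
    by (cases "?la = 0"; cases "?lb = 0") (simp_all add: pdiff_single mult_single left right)
qed

lemma pdiff_mult: "pdiff m (p * q) = pdiff m p * q + p * pdiff m q"
proof -
  let ?P = "\<Sum>a\<in>Poly_Mapping.keys p. Poly_Mapping.single a (Poly_Mapping.lookup p a)"
  let ?Q = "\<Sum>b\<in>Poly_Mapping.keys q. Poly_Mapping.single b (Poly_Mapping.lookup q b)"
  have "pdiff m (?P * ?Q) = pdiff m ?P * ?Q + ?P * pdiff m ?Q"
    by (simp add: sum_distrib_left sum_distrib_right pdiff_sum pdiff_single_mult_single
        sum.distrib sum.swap[of _ "Poly_Mapping.keys q"])
  then show ?thesis
    by (simp flip: poly_mapping_sum_single)
qed

lemma pdiff_1 [simp]: "pdiff m 1 = 0"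
  by (metis pdiff_const single_one)

lemma pdiff_of_int: "pdiff m (of_int z :: 'a::comm_ring_1 mvpoly) = 0"
  by (metis pdiff_const single_of_int)

lemma lookup_single_unit_exp_mult:
  "Poly_Mapping.lookup (Poly_Mapping.single (unit_exp i) c * q) a =
     (if Poly_Mapping.lookup a i = 0 then 0 else c * Poly_Mapping.lookup q (a - unit_exp i))"
proof -
  have "Poly_Mapping.single (unit_exp i) c * q =
      (\<Sum>b\<in>Poly_Mapping.keys q. Poly_Mapping.single (b + unit_exp i) (c * Poly_Mapping.lookup q b))"
    by (subst poly_mapping_sum_single[of q]) (simp add: sum_distrib_left mult_single add.commute)
  then have "Poly_Mapping.lookup (Poly_Mapping.single (unit_exp i) c * q) a =
      (\<Sum>b\<in>Poly_Mapping.keys q. if a = b + unit_exp i then c * Poly_Mapping.lookup q b else 0)"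
    by (simp add: lookup_sum lookup_single when_def eq_commute)
  also have "\<dots> = (if Poly_Mapping.lookup a i = 0 then 0 else c * Poly_Mapping.lookup q (a - unit_exp i))"
  proof (cases "Poly_Mapping.lookup a i = 0")
    case True
    then have "a \<noteq> b + unit_exp i" for b
      by (auto simp: lookup_add_unit_exp)
    with True show ?thesis
      by simp
  qed (auto simp: eq_add_unit_exp_iff sum.delta' in_keys_iff)
  finally show ?thesis .
qed

section \<open>Complete homogeneous functions\<close>

definition weight_exps :: "nat \<Rightarrow> (nat \<Rightarrow>\<^sub>0 nat) set" where
  "weight_exps N = {a. 0 \<notin> Poly_Mapping.keys a \<and> exp_weight a = N}"

lemma weight_exps_bounds:
  assumes "a \<in> weight_exps N"
  shows "Poly_Mapping.keys a \<subseteq> {1..N}" "Poly_Mapping.lookup a i \<le> N"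
proof -
  have z: "0 \<notin> Poly_Mapping.keys a" and w: "exp_weight a = N"
    using assms by (auto simp: weight_exps_def)
  have le: "Poly_Mapping.lookup a i \<le> N \<and> 1 \<le> i \<and> i \<le> N" if "i \<in> Poly_Mapping.keys a" for i
  proof -
    have "i * Poly_Mapping.lookup a i \<le> N"
      using w that unfolding exp_weight_def by (metis finite_keys member_le_sum zero_le)
    moreover have "i \<noteq> 0" "Poly_Mapping.lookup a i \<noteq> 0"
      using that z by (metis, simp add: in_keys_iff)
    then have "i \<ge> 1" "Poly_Mapping.lookup a i \<ge> 1"
      by linarith+
    ultimately show ?thesis
      by (metis dual_order.trans mult_le_mono1 mult_le_mono2 mult_1 mult_1_right)
  qed
  show "Poly_Mapping.keys a \<subseteq> {1..N}"
    using le by auto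
  show "Poly_Mapping.lookup a i \<le> N"
    using le by (cases "i \<in> Poly_Mapping.keys a") (auto simp: in_keys_iff)
qed

lemma finite_weight_exps: "finite (weight_exps N)"
proof -
  let ?f = "\<lambda>a. map (Poly_Mapping.lookup a) [0..<Suc N]"
  have "inj_on ?f (weight_exps N)"
  proof (rule inj_onI, rule poly_mapping_eqI)
    fix a b k
    assume a: "a \<in> weight_exps N" and b: "b \<in> weight_exps N" and eq: "?f a = ?f b"
    show "Poly_Mapping.lookup a k = Poly_Mapping.lookup b k"
    proof (cases "k \<le> N")
      case True
      then show ?thesis
        using eq by (cases "k = N") (auto simp: map_eq_conv)
    next
      case False
      then have "k \<notin> Poly_Mapping.keys a" "k \<notin> Poly_Mapping.keys b"
        using weight_exps_bounds(1)[OF a] weight_exps_bounds(1)[OF b] by auto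
      then show ?thesis
        by (simp add: in_keys_iff)
    qed
  qed
  moreover have "?f ` weight_exps N \<subseteq> {xs. set xs \<subseteq> {..N} \<and> length xs = Suc N}"
    using weight_exps_bounds(2) by auto
  then have "finite (?f ` weight_exps N)"
    by (rule finite_subset) (rule finite_lists_length_eq, simp)
  ultimately show ?thesis
    using finite_imageD by blast
qed

lemma lookup_hfun:
  "Poly_Mapping.lookup (hfun n) a =
     (if 0 \<le> n \<and> a \<in> weight_exps (nat n) then 1 / of_nat (exp_fact a) else 0)"
proof (cases "n < 0")
  case False
  then have "hfun n = (\<Sum>b\<in>weight_exps (nat n). Poly_Mapping.single b (1 / of_nat (exp_fact b)))"
    by (simp add: hfun_def weight_exps_def exp_weight_def exp_fact_def)
  then show ?thesis
    using False by (simp add: lookup_sum lookup_single when_def finite_weight_exps)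
qed (simp add: hfun_def)

lemma hfun_negative: "n < 0 \<Longrightarrow> hfun n = 0"
  by (simp add: hfun_def)

lemma exp_weight_eq_0_iff: "0 \<notin> Poly_Mapping.keys (a :: nat \<Rightarrow>\<^sub>0 nat) \<Longrightarrow> exp_weight a = 0 \<longleftrightarrow> a = 0"
  using weight_exps_bounds(1)[of a 0] by (auto simp: weight_exps_def exp_weight_def)

lemma hfun_0: "hfun 0 = 1"
  by (rule poly_mapping_eqI)
     (auto simp: lookup_hfun lookup_one when_def weight_exps_def exp_weight_eq_0_iff exp_fact_def)

lemma pdiff_hfun:
  assumes "m \<noteq> 0"
  shows "pdiff m (hfun n) = hfun (n - int m)"
proof (rule poly_mapping_eqI)
  fix a :: "nat \<Rightarrow>\<^sub>0 nat"
  let ?l = "Poly_Mapping.lookup a m"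
  have cond: "0 \<le> n \<and> a + unit_exp m \<in> weight_exps (nat n) \<longleftrightarrow>
      0 \<le> n - int m \<and> a \<in> weight_exps (nat (n - int m))"
    using assms by (auto simp: weight_exps_def keys_add_unit_exp exp_weight_add_unit_exp)
  have arith: "of_nat (?l + 1) * (1 / of_nat ((?l + 1) * exp_fact a)) = (1 / of_nat (exp_fact a) :: rat)"
    using exp_fact_pos[of a]
    by (simp add: field_simps del: of_nat_add of_nat_Suc) (simp add: algebra_simps flip: of_nat_mult)
  show "Poly_Mapping.lookup (pdiff m (hfun n)) a = Poly_Mapping.lookup (hfun (n - int m)) a"
    unfolding lookup_pdiff lookup_hfun exp_fact_add_unit_exp cond
    by (simp only: arith if_distrib[of "\<lambda>x. of_nat (?l + 1) * x"] mult_zero_right)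
qed

lemma lookup_unit_exp_mult_hfun:
  assumes "i \<noteq> 0" "i \<le> n"
  shows "Poly_Mapping.lookup (Poly_Mapping.single (unit_exp i) (of_nat i) * hfun (int n - int i)) a =
    (if a \<in> weight_exps n then of_nat (i * Poly_Mapping.lookup a i) / of_nat (exp_fact a) else 0)"
proof (cases "Poly_Mapping.lookup a i = 0")
  case False
  define b where "b = a - unit_exp i"
  have a: "a = b + unit_exp i"
    unfolding b_def using diff_add_unit_exp[OF False] by simp
  let ?l = "Poly_Mapping.lookup b i"
  have cond: "0 \<le> int n - int i \<and> b \<in> weight_exps (nat (int n - int i)) \<longleftrightarrow> a \<in> weight_exps n"
    using assms by (auto simp: a weight_exps_def keys_add_unit_exp exp_weight_add_unit_exp)
  have arith: "rat_of_nat i * (1 / of_nat (exp_fact b)) = of_nat (i * (?l + 1)) / of_nat ((?l + 1) * exp_fact b)"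
    using exp_fact_pos[of b]
    by (simp add: field_simps del: of_nat_add of_nat_Suc) (simp add: algebra_simps flip: of_nat_mult)
  have "Poly_Mapping.lookup (Poly_Mapping.single (unit_exp i) (of_nat i) * hfun (int n - int i)) a =
      (if a \<in> weight_exps n then of_nat i * (1 / of_nat (exp_fact b)) else 0)"
    using False unfolding lookup_single_unit_exp_mult lookup_hfun b_def[symmetric] cond by simp
  also have "\<dots> = (if a \<in> weight_exps n then of_nat (i * Poly_Mapping.lookup a i) / of_nat (exp_fact a) else 0)"
    by (simp only: arith a lookup_add_unit_exp exp_fact_add_unit_exp) simp
  finally show ?thesis .
qed (simp add: lookup_single_unit_exp_mult)

text \<open>Coefficientwise, \<open>H' = (\<Sum> i t\<^sub>i z\<^sup>i\<^sup>-\<^sup>1) H\<close> for \<open>H = exp (\<Sum> t\<^sub>i z\<^sup>i)\<close>.\<close>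
lemma hfun_recurrence:
  "of_nat n * hfun (int n) =
     (\<Sum>i\<in>{1..n}. Poly_Mapping.single (unit_exp i) (of_nat i) * hfun (int n - int i))"
proof (rule poly_mapping_eqI)
  fix a
  have "Poly_Mapping.lookup (\<Sum>i\<in>{1..n}. Poly_Mapping.single (unit_exp i) (of_nat i) * hfun (int n - int i)) a =
      (if a \<in> weight_exps n then (\<Sum>i\<in>{1..n}. of_nat (i * Poly_Mapping.lookup a i)) / of_nat (exp_fact a) else 0)"
    by (simp add: lookup_sum lookup_unit_exp_mult_hfun sum_divide_distrib)
  also have "\<dots> = (if a \<in> weight_exps n then of_nat n / of_nat (exp_fact a) else 0)"
  proof (cases "a \<in> weight_exps n")
    case True
    then have weight: "(\<Sum>i\<in>{1..n}. i * Poly_Mapping.lookup a i) = n"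
      using exp_weight_superset[of "{1..n}" a] weight_exps_bounds(1)[of a n] by (simp add: weight_exps_def)
    show ?thesis
      by (simp only: True if_True weight flip: of_nat_sum)
  qed simp
  finally show "Poly_Mapping.lookup (of_nat n * hfun (int n)) a =
      Poly_Mapping.lookup (\<Sum>i\<in>{1..n}. Poly_Mapping.single (unit_exp i) (of_nat i) * hfun (int n - int i)) a"
    by (simp add: lookup_hfun map.rep_eq when_def flip: single_of_nat mult_map_scale_conv_mult)
qed

section \<open>Determinants in Leibniz form\<close>

definition leibniz_det :: "nat \<Rightarrow> (nat \<Rightarrow> nat \<Rightarrow> 'a::comm_ring_1) \<Rightarrow> 'a" where
  "leibniz_det n A = (\<Sum>p | p permutes {..<n}. of_int (sign p) * (\<Prod>i<n. A i (p i)))"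

lemma leibniz_det_eq_det: "leibniz_det n A = det (mat n n (\<lambda>(i, j). A i j))"
proof -
  have "det (mat n n (\<lambda>(i, j). A i j)) =
      (\<Sum>p\<in>{p. p permutes {0..<n}}. signof p * (\<Prod>i=0..<n. mat n n (\<lambda>(i, j). A i j) $$ (i, p i)))"
    by (rule det_def') simp
  also have "\<dots> = leibniz_det n A"
    unfolding leibniz_det_def lessThan_atLeast0
  proof (rule sum.cong[OF refl])
    fix p
    assume "p \<in> {p. p permutes {0..<n}}"
    then have "p i < n" if "i < n" for i
      using that permutes_in_image by fastforce
    then show "signof p * (\<Prod>i=0..<n. mat n n (\<lambda>(i, j). A i j) $$ (i, p i)) =
        of_int (sign p) * (\<Prod>i=0..<n. A i (p i))"
      by (auto intro!: prod.cong)
  qed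
  finally show ?thesis
    by simp
qed

lemma leibniz_det_cong:
  "(\<And>i j. i < n \<Longrightarrow> j < n \<Longrightarrow> A i j = B i j) \<Longrightarrow> leibniz_det n A = leibniz_det n B"
  unfolding leibniz_det_eq_det by (intro arg_cong[where f = det] eq_matI) auto

lemma leibniz_det_0 [simp]: "leibniz_det 0 A = 1"
  by (simp add: leibniz_det_eq_det)

lemma leibniz_det_Suc_0 [simp]: "leibniz_det (Suc 0) A = A 0 0"
  unfolding leibniz_det_eq_det by (subst det_single) auto

lemma leibniz_det_zero_row:
  assumes "r < n" "\<And>j. j < n \<Longrightarrow> A r j = 0"
  shows "leibniz_det n A = 0"
  unfolding leibniz_det_def
proof (rule sum.neutral, rule ballI)
  fix p
  assume "p \<in> {p. p permutes {..<n}}"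
  then have "p r < n"
    using assms(1) permutes_in_image by fastforce
  then have "(\<Prod>i<n. A i (p i)) = 0"
    using assms by (intro prod_zero) auto
  then show "of_int (sign p) * (\<Prod>i<n. A i (p i)) = 0"
    by simp
qed

lemma leibniz_det_proportional_rows:
  assumes "2 \<le> n" and "\<And>j. j < n \<Longrightarrow> A 0 j = c * A 1 j"
  shows "leibniz_det n A = 0"
proof -
  define B where "B = mat n n (\<lambda>(i, j). if i = 0 then A 1 j else A i j)"
  have B: "B \<in> carrier_mat n n"
    by (simp add: B_def)
  have "mat n n (\<lambda>(i, j). A i j) = multrow 0 c B"
    by (rule eq_matI) (auto simp: B_def assms(2))
  moreover have "det B = 0"
    by (rule det_identical_rows[OF B, of 0 1]) (use assms(1) in \<open>auto intro!: eq_vecI simp: B_def\<close>)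
  ultimately show ?thesis
    unfolding leibniz_det_eq_det using det_multrow[OF _ B, of 0 c] assms(1) by simp
qed

lemma leibniz_det_expand_first_column:
  assumes "1 \<le> n" and "\<And>i. 2 \<le> i \<Longrightarrow> i \<le> n \<Longrightarrow> A i 0 = 0"
  shows "leibniz_det (Suc n) A =
           A 0 0 * leibniz_det n (\<lambda>i j. A (Suc i) (Suc j))
           - A 1 0 * leibniz_det n (\<lambda>i j. A (if i = 0 then 0 else Suc i) (Suc j))"
proof -
  define M where "M = mat (Suc n) (Suc n) (\<lambda>(i, j). A i j)"
  have M: "M \<in> carrier_mat (Suc n) (Suc n)"
    by (simp add: M_def)
  have "det M = (\<Sum>i<Suc n. M $$ (i, 0) * cofactor M i 0)"
    by (rule laplace_expansion_column[OF M]) simp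
  also have "\<dots> = (\<Sum>i\<in>{0, 1}. M $$ (i, 0) * cofactor M i 0)"
    by (rule sum.mono_neutral_right) (use assms in \<open>auto simp: M_def\<close>)
  finally have "det M = M $$ (0, 0) * cofactor M 0 0 + M $$ (1, 0) * cofactor M 1 0"
    by simp
  moreover have "mat_delete M 0 0 = mat n n (\<lambda>(i, j). A (Suc i) (Suc j))"
    by (rule eq_matI) (auto simp: M_def mat_delete_def)
  moreover have "mat_delete M 1 0 = mat n n (\<lambda>(i, j). A (if i = 0 then 0 else Suc i) (Suc j))"
    by (rule eq_matI) (auto simp: M_def mat_delete_def)
  ultimately show ?thesis
    unfolding leibniz_det_eq_det M_def[symmetric] cofactor_def using assms(1) by (simp add: M_def)
qed

lemma comm_ring_hom_leibniz_det:
  assumes "comm_ring_hom h"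
  shows "h (leibniz_det n A) = leibniz_det n (\<lambda>i j. h (A i j))"
proof -
  interpret comm_ring_hom h
    by fact
  show ?thesis
    by (simp add: leibniz_det_def hom_distribs)
qed

lemma schur_eq_leibniz_det:
  "schur lam = leibniz_det (length lam) (\<lambda>i j. hfun (int (lam ! i) - int i + int j))"
  by (simp add: schur_def leibniz_det_def Let_def)

section \<open>Elementary functions\<close>

definition efun :: "nat \<Rightarrow> rat mvpoly" where
  "efun n = leibniz_det n (\<lambda>i j. hfun (1 - int i + int j))"

text \<open>The Jacobi--Trudi determinant of the hook \<open>(k, 1\<^sup>n\<^sup>-\<^sup>1)\<close>, extended to all integers \<open>k\<close>.\<close>
definition hook_det :: "nat \<Rightarrow> int \<Rightarrow> rat mvpoly" where
  "hook_det n k = leibniz_det n (\<lambda>i j. if i = 0 then hfun (k + int j) else hfun (1 - int i + int j))"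

lemma efun_0 [simp]: "efun 0 = 1"
  by (simp add: efun_def)

lemma efun_eq_hook_det: "efun n = hook_det n 1"
  unfolding efun_def hook_det_def by (rule leibniz_det_cong) simp

lemma hook_det_Suc:
  assumes "1 \<le> n"
  shows "hook_det (Suc n) k = hfun k * efun n - hook_det n (k + 1)"
proof -
  have "hook_det (Suc n) k = hfun k * leibniz_det n (\<lambda>i j. hfun (1 - int (Suc i) + int (Suc j)))
      - hfun 0 * leibniz_det n (\<lambda>i j. if i = 0 then hfun (k + int (Suc j))
                                      else hfun (1 - int (Suc i) + int (Suc j)))"
    unfolding hook_det_def
    by (subst leibniz_det_expand_first_column) (use assms in \<open>auto simp: hfun_negative
        intro!: arg_cong2[where f = "(-)"] arg_cong2[where f = "(*)"] leibniz_det_cong\<close>)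
  also have "leibniz_det n (\<lambda>i j. hfun (1 - int (Suc i) + int (Suc j))) = efun n"
    unfolding efun_def by (rule leibniz_det_cong, rule arg_cong[where f = hfun]) simp
  also have "leibniz_det n (\<lambda>i j. if i = 0 then hfun (k + int (Suc j))
                                    else hfun (1 - int (Suc i) + int (Suc j))) = hook_det n (k + 1)"
    unfolding hook_det_def by (rule leibniz_det_cong) (simp add: algebra_simps)
  finally show ?thesis
    by (simp add: hfun_0)
qed

lemma hook_det_eq_sum:
  "hook_det (Suc n) k = (\<Sum>r\<le>n. of_int ((-1) ^ r) * hfun (k + int r) * efun (n - r))"
proof (induction n arbitrary: k)
  case 0
  show ?case
    by (simp add: hook_det_def)
next
  case (Suc n)
  have "hook_det (Suc (Suc n)) k = hfun k * efun (Suc n) - hook_det (Suc n) (k + 1)"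
    by (rule hook_det_Suc) simp
  also have "\<dots> = (\<Sum>r\<le>Suc n. of_int ((-1) ^ r) * hfun (k + int r) * efun (Suc n - r))"
    unfolding Suc.IH by (subst sum.atMost_Suc_shift) (simp add: sum_negf algebra_simps)
  finally show ?case .
qed

lemma efun_Suc: "efun (Suc n) = (\<Sum>r\<le>n. of_int ((-1) ^ r) * hfun (1 + int r) * efun (n - r))"
  using hook_det_eq_sum[of n 1] by (simp add: efun_eq_hook_det)

text \<open>Coefficientwise, \<open>H(-z) E(z) = 1\<close>.\<close>
lemma hfun_efun_convolution:
  assumes "N \<noteq> 0"
  shows "(\<Sum>s\<le>N. of_int ((-1) ^ s) * hfun (int s) * efun (N - s)) = 0"
proof -
  obtain n where N: "N = Suc n"
    using assms by (cases N) auto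
  show ?thesis
    unfolding N by (subst sum.atMost_Suc_shift) (simp add: hfun_0 efun_Suc[of n] sum_negf algebra_simps)
qed

definition hfun_series :: "rat mvpoly fps" where
  "hfun_series = Abs_fps (\<lambda>s. of_int ((-1) ^ s) * hfun (int s))"

definition efun_series :: "rat mvpoly fps" where
  "efun_series = Abs_fps efun"

definition fps_pdiff :: "nat \<Rightarrow> rat mvpoly fps \<Rightarrow> rat mvpoly fps" where
  "fps_pdiff m F = Abs_fps (\<lambda>n. pdiff m (fps_nth F n))"

lemma hfun_series_mult_efun_series: "hfun_series * efun_series = 1"
proof (rule fps_ext)
  fix N
  show "fps_nth (hfun_series * efun_series) N = fps_nth 1 N"
  proof (cases "N = 0")
    case False
    then show ?thesis
      using hfun_efun_convolution[of N]
      by (simp add: fps_mult_nth hfun_series_def efun_series_def atLeast0AtMost)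
  qed (simp add: hfun_series_def efun_series_def hfun_0)
qed

lemma fps_pdiff_mult: "fps_pdiff m (F * G) = fps_pdiff m F * G + F * fps_pdiff m G"
  by (rule fps_ext) (simp add: fps_pdiff_def fps_mult_nth pdiff_sum pdiff_mult sum.distrib)

lemma fps_pdiff_1: "fps_pdiff m 1 = 0"
  by (rule fps_ext) (simp add: fps_pdiff_def pdiff_0)

lemma fps_pdiff_hfun_series:
  assumes "m \<noteq> 0"
  shows "fps_pdiff m hfun_series = fps_const (of_int ((-1) ^ m)) * (fps_X ^ m * hfun_series)"
proof (rule fps_ext)
  fix n
  have "pdiff m (of_int ((-1) ^ n) * hfun (int n)) = of_int ((-1) ^ n) * hfun (int n - int m)"
    by (simp only: pdiff_mult pdiff_of_int pdiff_hfun[OF assms]) simp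
  then have lhs: "fps_nth (fps_pdiff m hfun_series) n = of_int ((-1) ^ n) * hfun (int n - int m)"
    by (simp add: fps_pdiff_def hfun_series_def)
  show "fps_nth (fps_pdiff m hfun_series) n =
      fps_nth (fps_const (of_int ((-1) ^ m)) * (fps_X ^ m * hfun_series)) n"
  proof (cases "n < m")
    case True
    then show ?thesis
      unfolding lhs by (simp add: hfun_negative fps_X_power_mult_nth)
  next
    case False
    then have "(-1 :: int) ^ n = (-1) ^ m * (-1) ^ (n - m)" and "int n - int m = int (n - m)"
      by (simp_all flip: power_add)
    then show ?thesis
      unfolding lhs using False by (simp add: hfun_series_def fps_X_power_mult_nth)
  qed
qed

lemma fps_pdiff_efun_series:
  assumes "m \<noteq> 0"
  shows "fps_pdiff m efun_series = - (fps_const (of_int ((-1) ^ m)) * (fps_X ^ m * efun_series))"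
proof -
  let ?c = "fps_const (of_int ((-1) ^ m)) * fps_X ^ m :: rat mvpoly fps"
  note HE = hfun_series_mult_efun_series
  have "0 = fps_pdiff m (hfun_series * efun_series)"
    by (simp add: HE fps_pdiff_1)
  also have "\<dots> = ?c * (hfun_series * efun_series) + hfun_series * fps_pdiff m efun_series"
    using assms by (simp add: fps_pdiff_mult fps_pdiff_hfun_series algebra_simps)
  finally have "efun_series * (?c + hfun_series * fps_pdiff m efun_series) = 0"
    by (simp add: HE)
  then have "?c * efun_series + (hfun_series * efun_series) * fps_pdiff m efun_series = 0"
    by (simp add: algebra_simps)
  then show ?thesis
    by (simp add: HE mult.assoc eq_neg_iff_add_eq_0 add.commute)
qed

lemma pdiff_efun:
  assumes "m \<noteq> 0"
  shows "pdiff m (efun n) = of_int ((-1) ^ (m + 1)) * (if n < m then 0 else efun (n - m))"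
proof -
  have "pdiff m (efun n) = fps_nth (fps_pdiff m efun_series) n"
    by (simp add: fps_pdiff_def efun_series_def)
  also have "\<dots> = - (of_int ((-1) ^ m) * (if n < m then 0 else efun (n - m)))"
    unfolding fps_pdiff_efun_series[OF assms] by (simp add: efun_series_def fps_X_power_mult_nth)
  finally show ?thesis
    by (auto simp: power_add)
qed

section \<open>Evaluation at the Miwa points \<open>\<plusminus>[x]\<close>\<close>

abbreviation miwa :: "int \<Rightarrow> nat \<Rightarrow> rat poly" where
  "miwa eps \<equiv> \<lambda>i. Polynomial.monom (of_int eps / of_nat i) i"

definition miwa_eval :: "int \<Rightarrow> rat mvpoly \<Rightarrow> rat poly" where
  "miwa_eval eps = evalp (\<lambda>q. [:q:]) (miwa eps)"

lemma comm_ring_hom_const_poly: "comm_ring_hom (\<lambda>c :: 'a::comm_ring_1. [:c:])"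
  by unfold_locales (simp_all add: mult_to_poly)

lemma comm_ring_hom_miwa_eval: "comm_ring_hom (miwa_eval eps)"
  unfolding miwa_eval_def by (rule comm_ring_hom_evalp[OF comm_ring_hom_const_poly])

interpretation miwa_eval: comm_ring_hom "miwa_eval eps" for eps
  by (rule comm_ring_hom_miwa_eval)

lemma schur_x_eq_leibniz_det:
  "schur_x eps lam =
     leibniz_det (length lam) (\<lambda>i j. miwa_eval eps (hfun (int (lam ! i) - int i + int j)))"
  unfolding schur_x_def schur_eq_leibniz_det miwa_eval_def[symmetric]
  by (rule comm_ring_hom_leibniz_det[OF comm_ring_hom_miwa_eval])

lemma miwa_eval_single_unit_exp:
  "miwa_eval eps (Poly_Mapping.single (unit_exp i) c) = [:c:] * miwa eps i"
  using evalp_single[OF comm_ring_hom_const_poly] by (simp add: miwa_eval_def monom_eval_unit_exp)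

lemma miwa_eval_hfun_recurrence:
  "of_nat n * miwa_eval eps (hfun (int n)) =
     (\<Sum>i\<in>{1..n}. Polynomial.monom (of_int eps) i * miwa_eval eps (hfun (int n - int i)))"
proof -
  have "of_nat n * miwa_eval eps (hfun (int n)) = miwa_eval eps (of_nat n * hfun (int n))"
    by (simp add: hom_distribs)
  also have "\<dots> = (\<Sum>i\<in>{1..n}. [:of_nat i:] * miwa eps i * miwa_eval eps (hfun (int n - int i)))"
    unfolding hfun_recurrence by (simp add: hom_distribs miwa_eval_single_unit_exp)
  also have "\<dots> = (\<Sum>i\<in>{1..n}. Polynomial.monom (of_int eps) i * miwa_eval eps (hfun (int n - int i)))"
    by (intro sum.cong refl) (simp add: mult_monom flip: monom_0)
  finally show ?thesis .
qed

lemma miwa_eval_plus_hfun: "miwa_eval 1 (hfun (int n)) = Polynomial.monom 1 n"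
proof (induction n rule: less_induct)
  case (less n)
  show ?case
  proof (cases "n = 0")
    case False
    have "of_nat n * miwa_eval 1 (hfun (int n)) = (\<Sum>i\<in>{1..n}. Polynomial.monom 1 n)"
      unfolding miwa_eval_hfun_recurrence
      by (intro sum.cong refl) (simp add: less.IH mult_monom flip: of_nat_diff)
    then show ?thesis
      using False by simp
  qed (simp add: hfun_0)
qed

lemma miwa_eval_minus_hfun:
  "miwa_eval (-1) (hfun (int n)) =
     (if n = 0 then 1 else if n = 1 then - Polynomial.monom 1 1 else 0)"
proof (induction n rule: less_induct)
  case (less n)
  show ?case
  proof (cases "n = 0")
    case False
    have "of_nat n * miwa_eval (-1) (hfun (int n)) =
        (\<Sum>i\<in>{1..n}. (if i = n then - Polynomial.monom 1 n else 0)
                       + (if i = n - 1 then Polynomial.monom 1 n else 0))"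
      unfolding miwa_eval_hfun_recurrence
      using False by (intro sum.cong refl) (auto simp: less.IH mult_monom minus_monom simp flip: of_nat_diff)
    also have "\<dots> = (if n = 1 then - Polynomial.monom 1 1 else 0)"
      using False by (simp add: sum.distrib, arith)
    finally have "of_nat n * miwa_eval (-1) (hfun (int n)) =
        (if n = 1 then - Polynomial.monom 1 1 else 0)" .
    then show ?thesis
      using False by (cases "n = 1") simp_all
  qed (simp add: hfun_0)
qed

lemma miwa_eval_minus_efun: "miwa_eval (-1) (efun n) = Polynomial.monom ((-1) ^ n) n"
proof (induction n)
  case (Suc n)
  have "miwa_eval (-1) (efun (Suc n)) =
      (\<Sum>r\<le>n. of_int ((-1) ^ r) * miwa_eval (-1) (hfun (1 + int r)) * miwa_eval (-1) (efun (n - r)))"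
    by (simp add: efun_Suc hom_distribs)
  also have "\<dots> = (\<Sum>r\<in>{0}. of_int ((-1) ^ r) * miwa_eval (-1) (hfun (1 + int r)) * miwa_eval (-1) (efun (n - r)))"
  proof (rule sum.mono_neutral_right)
    show "\<forall>r\<in>{..n} - {0}. of_int ((-1) ^ r) * miwa_eval (-1) (hfun (1 + int r)) * miwa_eval (-1) (efun (n - r)) = 0"
      using miwa_eval_minus_hfun[of "Suc _"] by (auto simp: One_nat_def)
  qed auto
  also have "\<dots> = Polynomial.monom ((-1) ^ Suc n) (Suc n)"
    using miwa_eval_minus_hfun[of 1] by (simp add: Suc.IH mult_monom minus_monom One_nat_def)
  finally show ?case .
qed (simp add: efun_def)

lemma partition_nth_pos: "is_partition lam \<Longrightarrow> i < length lam \<Longrightarrow> 0 < lam ! i"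
  unfolding is_partition_def by (meson nth_mem)

lemma partition_nth_mono: "is_partition lam \<Longrightarrow> i \<le> j \<Longrightarrow> j < length lam \<Longrightarrow> lam ! j \<le> lam ! i"
  unfolding is_partition_def by (metis le_eq_less_or_eq order_refl sorted_wrt_nth_less)

lemma partition_eq_column:
  assumes "is_partition lam" and "lam = [] \<or> lam ! 0 \<le> 1"
  shows "lam = replicate (length lam) 1"
proof (rule nth_equalityI)
  fix i
  assume i: "i < length lam"
  then show "lam ! i = replicate (length lam) 1 ! i"
    using assms partition_nth_mono[OF assms(1), of 0 i] partition_nth_pos[OF assms(1) i] by auto
qed simp

lemma schur_x_Nil: "schur_x eps [] = 1"
  by (simp add: schur_x_eq_leibniz_det)

lemma schur_x_plus_row: "schur_x 1 [n] = Polynomial.monom 1 n"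
  by (simp add: schur_x_eq_leibniz_det miwa_eval_plus_hfun)

text \<open>At \<open>[x]\<close> the first row of the Jacobi--Trudi matrix is \<open>x\<^sup>\<lambda>\<^sup>1\<^sup>-\<^sup>\<lambda>\<^sup>2\<^sup>+\<^sup>1\<close> times the second.\<close>
lemma schur_x_plus_long:
  assumes lam: "is_partition lam" and len: "2 \<le> length lam"
  shows "schur_x 1 lam = 0"
  unfolding schur_x_eq_leibniz_det
proof (rule leibniz_det_proportional_rows[OF len])
  fix j
  have pos: "1 \<le> lam ! 1" and mono: "lam ! 1 \<le> lam ! 0"
    using partition_nth_pos[OF lam, of 1] partition_nth_mono[OF lam, of 0 1] len by simp_all
  have row0: "miwa_eval 1 (hfun (int (lam ! 0) - int 0 + int j)) = Polynomial.monom 1 (lam ! 0 + j)"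
    using miwa_eval_plus_hfun[of "lam ! 0 + j"] by simp
  have "int (lam ! 1) - int 1 + int j = int (lam ! 1 - 1 + j)"
    using pos by simp
  then have row1: "miwa_eval 1 (hfun (int (lam ! 1) - int 1 + int j)) = Polynomial.monom 1 (lam ! 1 - 1 + j)"
    by (simp only: miwa_eval_plus_hfun)
  have "(lam ! 0 - lam ! 1 + 1) + (lam ! 1 - 1 + j) = lam ! 0 + j"
    using pos mono by linarith
  then show "miwa_eval 1 (hfun (int (lam ! 0) - int 0 + int j)) =
      Polynomial.monom 1 (lam ! 0 - lam ! 1 + 1) * miwa_eval 1 (hfun (int (lam ! 1) - int 1 + int j))"
    unfolding row0 row1 mult_monom by simp
qed

lemma schur_x_minus_wide:
  assumes "lam \<noteq> []" and "2 \<le> lam ! 0"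
  shows "schur_x (-1) lam = 0"
  unfolding schur_x_eq_leibniz_det
proof (rule leibniz_det_zero_row[of 0])
  fix j
  have "int (lam ! 0) - int 0 + int j = int (lam ! 0 + j)"
    by simp
  then show "miwa_eval (-1) (hfun (int (lam ! 0) - int 0 + int j)) = 0"
    using assms(2) by (simp only: miwa_eval_minus_hfun) simp
qed (use assms(1) in simp)

lemma schur_column: "schur (replicate n 1) = efun n"
  unfolding schur_eq_leibniz_det efun_def length_replicate by (rule leibniz_det_cong) simp

lemma schur_x_minus_column: "schur_x (-1) (replicate n 1) = Polynomial.monom ((-1) ^ n) n"
  using miwa_eval_minus_efun[of n] by (simp add: schur_x_def schur_column miwa_eval_def)

section \<open>Collapse of \<open>\<Psi>\<^sub>0\<^sup>\<plusminus>\<close> to a row or a column\<close>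

definition row_or_column :: "int \<Rightarrow> nat \<Rightarrow> nat list" where
  "row_or_column eps n = (if eps = 1 then (if n = 0 then [] else [n]) else replicate n 1)"

lemma is_partition_row_or_column: "is_partition (row_or_column eps n)"
  by (auto simp: row_or_column_def is_partition_def sorted_wrt_iff_nth_less)

lemma sum_list_row_or_column: "sum_list (row_or_column eps n) = n"
  by (simp add: row_or_column_def sum_list_replicate)

lemma schur_x_row_or_column:
  "eps \<in> {1, -1} \<Longrightarrow> schur_x eps (row_or_column eps n) = Polynomial.monom (of_int eps ^ n) n"
  by (auto simp: row_or_column_def schur_x_Nil schur_x_plus_row schur_x_minus_column)

lemma rlam_row_or_column:
  "eps \<in> {1, -1} \<Longrightarrow> rlam G (row_or_column eps n) = (\<Prod>c<n. Gat G (eps * int c))"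
  by (auto simp: row_or_column_def rlam_def lessThan_Suc One_nat_def intro!: prod.cong)

lemma rlam_row_or_column_add:
  assumes "eps \<in> {1, -1}"
  shows "rlam G (row_or_column eps (n + m)) =
           rlam G (row_or_column eps n) * (\<Prod>l<m. Gat G (eps * int (n + l)))"
  unfolding rlam_row_or_column[OF assms] by (induction m) (simp_all add: mult.assoc)

lemma coeff_schur_x_plus_nonzero:
  assumes lam: "is_partition lam" and "poly.coeff (schur_x 1 lam) N \<noteq> 0"
  shows "lam = row_or_column 1 N"
proof -
  consider "lam = []" | n where "lam = [n]" | "2 \<le> length lam"
    by (cases lam rule: remdups_adj.cases) auto
  then show ?thesis
  proof cases
    case (2 n)
    then have "0 < n"
      using partition_nth_pos[OF lam, of 0] by simp
    with 2 show ?thesis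
      using assms(2) by (auto simp: schur_x_plus_row row_or_column_def coeff_monom split: if_splits)
  qed (use assms(2) schur_x_plus_long[OF lam] in \<open>auto simp: schur_x_Nil row_or_column_def split: if_splits\<close>)
qed

lemma coeff_schur_x_minus_nonzero:
  assumes lam: "is_partition lam" and "poly.coeff (schur_x (-1) lam) N \<noteq> 0"
  shows "lam = row_or_column (-1) N"
proof -
  have "\<not> (lam \<noteq> [] \<and> 2 \<le> lam ! 0)"
    using assms(2) schur_x_minus_wide by auto
  then have "lam = replicate (length lam) 1"
    using partition_eq_column[OF lam] by force
  then show ?thesis
    using assms(2) schur_x_minus_column[of "length lam"]
    by (auto simp: row_or_column_def coeff_monom split: if_splits)
qed

lemma Psi0_collapse:
  assumes eps: "eps \<in> {1, -1}"
  shows "Psi0 G gam eps j a = (if 0 \<le> j then tau_term G gam eps (row_or_column eps (nat j)) j a else 0)"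
proof -
  let ?S = "{lam. is_partition lam \<and> tau_term G gam eps lam j a \<noteq> 0}"
  have "0 \<le> j \<and> lam = row_or_column eps (nat j)" if "lam \<in> ?S" for lam
    using that eps coeff_schur_x_plus_nonzero coeff_schur_x_minus_nonzero
    by (auto simp: tau_term_def split: if_splits)
  then have "?S \<subseteq> {row_or_column eps (nat j)}" and "j < 0 \<Longrightarrow> ?S = {}"
    by fastforce+
  moreover have "sum (\<lambda>lam. tau_term G gam eps lam j a) ?S =
      sum (\<lambda>lam. tau_term G gam eps lam j a) {row_or_column eps (nat j)}"
    if "?S \<subseteq> {row_or_column eps (nat j)}"
    by (rule sum.mono_neutral_left) (use that is_partition_row_or_column in auto)
  ultimately show ?thesis
    by (auto simp: Psi0_def)
qed

lemma Psi0_negative: "eps \<in> {1, -1} \<Longrightarrow> j < 0 \<Longrightarrow> Psi0 G gam eps j a = 0"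
  by (simp add: Psi0_collapse)

lemma Psi0_nonneg:
  assumes "eps \<in> {1, -1}"
  shows "Psi0 G gam eps (int n) a =
    fls_const (gam ^ n * of_int eps ^ n) * rlam G (row_or_column eps n) *
    Poly_Mapping.lookup (schur_s (row_or_column eps n)) a"
  using assms by (simp add: Psi0_collapse tau_term_def sum_list_row_or_column schur_x_row_or_column
      coeff_monom of_rat_power fls_const_mult_const[symmetric] mult_ac del: fls_const_mult_const)

lemma pdiff_schur_row_or_column:
  assumes "eps \<in> {1, -1}" and "m \<noteq> 0"
  shows "pdiff m (schur (row_or_column eps n)) =
           of_int (eps ^ (m + 1)) * (if n < m then 0 else schur (row_or_column eps (n - m)))"
proof -
  have "schur [] = 1" "schur [n] = hfun (int n)" for n
    by (simp_all add: schur_eq_leibniz_det)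
  then have "schur (row_or_column eps n) = (if eps = 1 then hfun (int n) else efun n)" for n
    by (auto simp: row_or_column_def hfun_0 schur_column)
  then show ?thesis
    using assms by (auto simp: pdiff_hfun pdiff_efun hfun_negative of_nat_diff)
qed

lemma single_unit_exp_power:
  "Poly_Mapping.single (unit_exp i) c ^ n = Poly_Mapping.single (Poly_Mapping.single i n) (c ^ n)"
  by (induction n) (simp_all add: mult_single add.commute flip: single_add Suc_eq_plus1)

lemma prod_single:
  "finite K \<Longrightarrow> (\<Prod>i\<in>K. Poly_Mapping.single (f i) (g i)) = Poly_Mapping.single (\<Sum>i\<in>K. f i) (\<Prod>i\<in>K. g i)"
  by (induction K rule: finite_induct) (simp_all add: mult_single)

lemma monom_eval_single_unit_exp:
  "monom_eval (\<lambda>i. Poly_Mapping.single (unit_exp i) (x :: 'a::comm_ring_1)) b =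
     Poly_Mapping.single b (x ^ exp_degree b)"
  by (simp add: monom_eval_def single_unit_exp_power prod_single power_sum exp_degree_def
      flip: poly_mapping_sum_single)

lemma lookup_schur_s:
  "Poly_Mapping.lookup (schur_s lam) a =
     fls_const (of_rat (Poly_Mapping.lookup (schur lam) a)) * (fls_X_inv :: 'k::field_char_0 fls) ^ exp_degree a"
proof -
  have "schur_s lam = (\<Sum>b\<in>Poly_Mapping.keys (schur lam).
      Poly_Mapping.single b (fls_const (of_rat (Poly_Mapping.lookup (schur lam) b)) * (fls_X_inv :: 'k fls) ^ exp_degree b))"
    unfolding schur_s_def evalp_def monom_eval_def[symmetric] monom_eval_single_unit_exp
    by (simp add: mult_single)
  then show ?thesis
    by (simp add: lookup_sum lookup_single when_def in_keys_iff)
qed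

lemma lookup_of_int_mult: "Poly_Mapping.lookup (of_int c * p) a = of_int c * Poly_Mapping.lookup p a"
  by (simp add: map.rep_eq when_def flip: single_of_int mult_map_scale_conv_mult)

text \<open>Coefficientwise form of \<open>\<partial>/\<partial>s\<^sub>m s\<^sub>\<lambda>(\<beta>\<^sup>-\<^sup>1 s) = \<beta>\<^sup>-\<^sup>1 (\<partial>s\<^sub>\<lambda>/\<partial>t\<^sub>m)(\<beta>\<^sup>-\<^sup>1 s)\<close>.\<close>
lemma lookup_schur_s_add_unit_exp:
  "of_nat (Poly_Mapping.lookup a m + 1) * Poly_Mapping.lookup (schur_s lam) (a + unit_exp m) =
     fls_X_inv * fls_const (of_rat (Poly_Mapping.lookup (pdiff m (schur lam)) a)) *
     (fls_X_inv :: 'k::field_char_0 fls) ^ exp_degree a"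
  by (simp add: lookup_schur_s lookup_pdiff exp_degree_add_unit_exp of_rat_mult of_rat_add
      fls_of_nat power_add mult_ac)

lemma lookup_schur_s_row_or_column_add_unit_exp:
  assumes "eps \<in> {1, -1}" and "m \<noteq> 0"
  shows "of_nat (Poly_Mapping.lookup a m + 1) *
           Poly_Mapping.lookup (schur_s (row_or_column eps n)) (a + unit_exp m) =
         fls_const (of_int eps ^ (m + 1)) * fls_X_inv *
           (if n < m then 0 else Poly_Mapping.lookup (schur_s (row_or_column eps (n - m))) a :: 'k::field_char_0 fls)"
  unfolding lookup_schur_s_add_unit_exp pdiff_schur_row_or_column[OF assms] lookup_of_int_mult
  by (cases "n < m") (simp_all add: lookup_schur_s of_rat_mult of_rat_power mult_ac)

section \<open>The operators \<open>R\<^sub>\<plusminus>\<close>\<close>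

lemma Gat_nonzero: "fps_nth G 0 = 1 \<Longrightarrow> Gat G c \<noteq> 0"
  by (metis Gat_def fps_compose_nth_0 fps_nonzero_nth fps_to_fls_eq_0_iff zero_neq_one)

lemma Rop_Rinv: "fps_nth G 0 = 1 \<Longrightarrow> gam \<noteq> 0 \<Longrightarrow> Rop G gam eps (Rinv G gam eps F) = F"
  by (intro ext) (simp add: Rop_def Rinv_def Gat_nonzero)

lemma Rinv_Rop: "fps_nth G 0 = 1 \<Longrightarrow> gam \<noteq> 0 \<Longrightarrow> Rinv G gam eps (Rop G gam eps F) = F"
  by (intro ext) (simp add: Rop_def Rinv_def Gat_nonzero)

lemma Rop_scaled_dS:
  "Rop G gam eps (\<lambda>j a. c * dS m F j a) = (\<lambda>j a. c * dS m (Rop G gam eps F) j a)"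
  by (intro ext) (simp add: Rop_def dS_def mult_ac)

lemma Rinv_scaled_dS:
  "Rinv G gam eps (\<lambda>j a. c * dS m F j a) = (\<lambda>j a. c * dS m (Rinv G gam eps F) j a)"
  by (intro ext) (simp add: Rinv_def dS_def mult_ac times_divide_eq_right)

lemma Rop_power:
  "(Rop G gam eps ^^ m) F j a =
     (\<Prod>l<m. fls_const gam * Gat G (eps * (j - int m + int l))) * F (j - int m) a"
proof (induction m arbitrary: j)
  case (Suc m)
  have "(Rop G gam eps ^^ Suc m) F j a = fls_const gam * Gat G (eps * (j - 1)) * (Rop G gam eps ^^ m) F (j - 1) a"
    by (simp add: Rop_def)
  also have "\<dots> = (\<Prod>l<Suc m. fls_const gam * Gat G (eps * (j - int (Suc m) + int l))) * F (j - int (Suc m)) a"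
    by (simp add: Suc.IH algebra_simps)
  finally show ?case .
qed simp

lemma Psi_add_1:
  assumes "fps_nth G 0 = 1" and "gam \<noteq> 0"
  shows "Psi G gam eps (k + 1) = Rop G gam eps (Psi G gam eps k)"
proof (cases "0 \<le> k")
  case True
  then have "nat (k + 1) = Suc (nat k)"
    by simp
  with True show ?thesis
    by (simp add: Psi_def)
next
  case False
  then have "nat (- k) = Suc (nat (- (k + 1)))"
    by simp
  with False show ?thesis
    by (simp add: Psi_def Rop_Rinv[OF assms])
qed

lemma Psi_diff_1:
  assumes "fps_nth G 0 = 1" and "gam \<noteq> 0"
  shows "Psi G gam eps (k - 1) = Rinv G gam eps (Psi G gam eps k)"
  using Psi_add_1[OF assms, of eps "k - 1"] by (simp add: Rinv_Rop[OF assms])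

lemma fls_X_times_X_inv: "fls_X * fls_X_inv = (1 :: 'a::field fls)"
  by (metis fls_X_nonzero fls_inverse_X right_inverse)

lemma dS_Psi0_nonneg:
  assumes "eps \<in> {1, -1}" and "m \<noteq> 0"
  shows "dS m (Psi0 G gam eps) (int n) a =
    fls_const (gam ^ n * of_int eps ^ n) * rlam G (row_or_column eps n) *
    (fls_const (of_int eps ^ (m + 1)) * fls_X_inv *
     (if n < m then 0 else Poly_Mapping.lookup (schur_s (row_or_column eps (n - m))) a))"
  unfolding dS_def Psi0_nonneg[OF assms(1)] lookup_schur_s_row_or_column_add_unit_exp[OF assms, symmetric]
  by (simp add: mult_ac)

lemma sign_power_cancel:
  assumes "eps \<in> {1, -1}"
  shows "of_int eps * of_int eps ^ (n + m) * of_int eps ^ (m + 1) = (of_int eps ^ n :: 'a::comm_ring_1)"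
proof -
  have "(of_int eps :: 'a) * of_int eps = 1"
    using assms by auto
  moreover have "of_int eps * of_int eps ^ (n + m) * of_int eps ^ (m + 1) =
      of_int eps ^ n * ((of_int eps :: 'a) * of_int eps) ^ (m + 1)"
    by (simp add: power_add power_mult_distrib mult_ac)
  ultimately show ?thesis
    by simp
qed

lemma Rop_power_Psi0_below:
  assumes eps: "eps \<in> {1, -1}" and m: "m \<noteq> 0" and j: "j < int m"
  shows "(Rop G gam eps ^^ m) (Psi0 G gam eps) j a = 0"
    and "dS m (Psi0 G gam eps) j a = 0"
proof -
  show "(Rop G gam eps ^^ m) (Psi0 G gam eps) j a = 0"
    using j by (simp add: Rop_power Psi0_negative[OF eps])
  show "dS m (Psi0 G gam eps) j a = 0"
  proof (cases "j < 0")
    case False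
    then obtain n where "j = int n" "n < m"
      using j by (intro that[of "nat j"]) auto
    then show ?thesis
      by (simp add: dS_Psi0_nonneg[OF eps m])
  qed (simp add: dS_def Psi0_negative[OF eps])
qed

lemma Rop_power_Psi0:
  assumes eps: "eps \<in> {1, -1}" and m: "m \<noteq> 0"
  shows "(Rop G gam eps ^^ m) (Psi0 G gam eps) j a =
           fls_const (of_int eps) * fls_X * dS m (Psi0 G gam eps) j a"
proof (cases "j < int m")
  case False
  then obtain n where j: "j = int (n + m)"
    by (intro that[of "nat j - m"]) auto
  let ?S = "Poly_Mapping.lookup (schur_s (row_or_column eps n)) a"
  let ?P = "\<Prod>l<m. Gat G (eps * int (n + l))"
  have "fls_const (of_int eps) * fls_X * dS m (Psi0 G gam eps) j a =
      fls_const (gam ^ (n + m) * (of_int eps * of_int eps ^ (n + m) * of_int eps ^ (m + 1))) *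
      (fls_X * fls_X_inv) * rlam G (row_or_column eps (n + m)) * ?S"
    unfolding j dS_Psi0_nonneg[OF eps m]
    by (simp add: fls_const_mult_const[symmetric] mult_ac del: fls_const_mult_const)
  also have "\<dots> = fls_const (gam ^ m) * ?P *
      (fls_const (gam ^ n * of_int eps ^ n) * rlam G (row_or_column eps n) * ?S)"
    unfolding sign_power_cancel[OF eps] fls_X_times_X_inv rlam_row_or_column_add[OF eps]
    by (simp add: power_add fls_const_mult_const[symmetric] fls_const_power mult_ac
        del: fls_const_mult_const)
  also have "\<dots> = (Rop G gam eps ^^ m) (Psi0 G gam eps) j a"
    by (simp add: Rop_power j Psi0_nonneg[OF eps] prod.distrib fls_const_power algebra_simps)
  finally show ?thesis
    by simp
qed (simp add: Rop_power_Psi0_below[OF assms])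

theorem proposition5p10:
  fixes G :: "'k::field_char_0 fps" and gam :: 'k and eps :: int and m :: nat and k :: int
  assumes "fps_nth G 0 = 1" and "gam \<noteq> 0" and "eps \<in> {1, -1}" and "0 < m"
  shows "Psi G gam eps (k + int m) =
         (\<lambda>j a. fls_const (of_int eps) * fls_X * dS m (Psi G gam eps k) j a)"
proof (induction k rule: int_induct[where k = 0])
  case base
  show ?case
    using assms(4) by (intro ext) (simp add: Psi_def Rop_power_Psi0[OF assms(3)])
next
  case (step1 i)
  have "Psi G gam eps (i + 1 + int m) = Rop G gam eps (Psi G gam eps (i + int m))"
    using Psi_add_1[OF assms(1,2), of eps "i + int m"] by (simp add: ac_simps)
  then show ?case
    by (simp add: step1.IH Rop_scaled_dS Psi_add_1[OF assms(1,2)])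
next
  case (step2 i)
  have "Psi G gam eps (i - 1 + int m) = Rinv G gam eps (Psi G gam eps (i + int m))"
    using Psi_diff_1[OF assms(1,2), of eps "i + int m"] by (simp add: algebra_simps)
  then show ?case
    by (simp add: step2.IH Rinv_scaled_dS Psi_diff_1[OF assms(1,2)])
qed

end
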